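(* Let $\mathbf{NeurRing}$ be the category whose objects are neural rings and whose morphisms are monomial maps, and let $\mathbf{Code}$ be the category of codes with morphisms of codes. The assignment $R$ sending a code $\mathcal{C}$ to its neural ring $R_{\mathcal{C}}$, and a morphism $f:\mathcal{C}\to\mathcal{D}$ to the ring homomorphism $f^*:R_{\mathcal{D}}\to R_{\mathcal{C}}$, $f^*(p)=p\circ f$ (regarding elements of neural rings as functions on codewords), is a contravariant equivalence of categories $\mathbf{Code}\to\mathbf{NeurRing}$.
   Context: A code is a subset $\mathcal{C}\subseteq 2^{[n]}$; in $\mathbf{Code}$, two codes that are equal as sets of subsets (e.g. $\mathcal{C}\subseteq 2^{[n]}$ regarded also as a subset of $2^{[m]}$, $m\ge n$) are the same object. For $\sigma\subseteq[n]$, $\mathrm{Tk}_{\mathcal{C}}(\sigma)=\{c\in\mathcal{C}\mid\sigma\subseteq c\}$; a trunk in $\mathcal{C}$ is a subset that is empty or of this form. A morphism of codes $f:\mathcal{C}\to\mathcal{D}$ is a function such that preimages of trunks in $\mathcal{D}$ are trunks in $\mathcal{C}$. A polynomial $p\in\mathbb{F}_2[x_1,\dots,x_n]$ defines a function $2^{[n]}\to\mathbb{F}_2$ by setting $x_i=1$ if $i\in c$ and $x_i=0$ otherwise. The vanishing ideal of $\mathcal{C}\subseteq 2^{[n]}$ is $I_{\mathcal{C}}=\{p\in\mathbb{F}_2[x_1,\dots,x_n]\mid p(c)=0\ \forall c\in\mathcal{C}\}$, and the neural ring is $R_{\mathcal{C}}=\mathbb{F}_2[x_1,\dots,x_n]/I_{\mathcal{C}}$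 together with its coordinate functions $x_1,\dots,x_n$; it is identified with the ring of functions $\mathcal{C}\to\mathbb{F}_2$. If $R_{\mathcal{C}}$, $R_{\mathcal{D}}$ have coordinates $x_1,\dots,x_n$ and $y_1,\dots,y_m$, a monomial map $R_{\mathcal{C}}\to R_{\mathcal{D}}$ is a ring homomorphism $\phi$ such that for every monomial $p$ in the $x_i$, $\phi(p)$ is either $0$ or a monomial in the $y_j$. *)

theory Defs
  imports Main "HOL-Library.Z2"
begin

text \<open>A code: a set of codewords, each a subset of [n] = {1..n} for some n.
  Codes equal as sets of subsets are the same object.\<close>
definition is_code :: "nat set set \<Rightarrow> bool" where
  "is_code C \<longleftrightarrow> (\<exists>n. \<forall>c\<in>C. c \<subseteq> {1..n})"

definition Tk :: "nat set set \<Rightarrow> nat set \<Rightarrow> nat set set" where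
  "Tk C \<sigma> = {c \<in> C. \<sigma> \<subseteq> c}"

definition is_trunk :: "nat set set \<Rightarrow> nat set set \<Rightarrow> bool" where
  "is_trunk C T \<longleftrightarrow> T = {} \<or> (\<exists>\<sigma>. finite \<sigma> \<and> T = Tk C \<sigma>)"

text \<open>Morphism of codes f : C -> D (as a function, relevant only on C).\<close>
definition code_morphism :: "nat set set \<Rightarrow> nat set set \<Rightarrow> (nat set \<Rightarrow> nat set) \<Rightarrow> bool" where
  "code_morphism C D f \<longleftrightarrow> (\<forall>c\<in>C. f c \<in> D) \<and>
     (\<forall>T. is_trunk D T \<longrightarrow> is_trunk C {c \<in> C. f c \<in> T})"

text \<open>Neural ring R_C, identified with the ring of functions C -> F_2
  (functions extended by 0 outside C), with pointwise operations.\<close>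
definition neural_ring :: "nat set set \<Rightarrow> (nat set \<Rightarrow> bit) set" where
  "neural_ring C = {p. \<forall>c. c \<notin> C \<longrightarrow> p c = 0}"

definition nr_one :: "nat set set \<Rightarrow> nat set \<Rightarrow> bit" where
  "nr_one C = (\<lambda>c. if c \<in> C then 1 else 0)"

definition coord :: "nat set set \<Rightarrow> nat \<Rightarrow> nat set \<Rightarrow> bit" where
  "coord C i = (\<lambda>c. if c \<in> C \<and> i \<in> c then 1 else 0)"

definition monomial :: "nat set set \<Rightarrow> nat set \<Rightarrow> nat set \<Rightarrow> bit" where
  "monomial C \<sigma> = (\<lambda>c. if c \<in> C then (\<Prod>i\<in>\<sigma>. coord C i c) else 0)"

definition is_monomial :: "nat set set \<Rightarrow> (nat set \<Rightarrow> bit) \<Rightarrow> bool" where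
  "is_monomial C p \<longleftrightarrow> (\<exists>\<sigma>. finite \<sigma> \<and> (\<forall>i\<in>\<sigma>. 1 \<le> i) \<and> p = monomial C \<sigma>)"

definition ring_hom_nr :: "nat set set \<Rightarrow> nat set set \<Rightarrow> ((nat set \<Rightarrow> bit) \<Rightarrow> (nat set \<Rightarrow> bit)) \<Rightarrow> bool" where
  "ring_hom_nr D C \<phi> \<longleftrightarrow>
     (\<forall>p\<in>neural_ring D. \<phi> p \<in> neural_ring C) \<and>
     (\<forall>p\<in>neural_ring D. \<forall>q\<in>neural_ring D. \<phi> (\<lambda>c. p c + q c) = (\<lambda>c. \<phi> p c + \<phi> q c)) \<and>
     (\<forall>p\<in>neural_ring D. \<forall>q\<in>neural_ring D. \<phi> (\<lambda>c. p c * q c) = (\<lambda>c. \<phi> p c * \<phi> q c)) \<and>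
     \<phi> (nr_one D) = nr_one C"

definition monomial_map :: "nat set set \<Rightarrow> nat set set \<Rightarrow> ((nat set \<Rightarrow> bit) \<Rightarrow> (nat set \<Rightarrow> bit)) \<Rightarrow> bool" where
  "monomial_map D C \<phi> \<longleftrightarrow> ring_hom_nr D C \<phi> \<and>
     (\<forall>p. is_monomial D p \<longrightarrow> \<phi> p = (\<lambda>c. 0) \<or> is_monomial C (\<phi> p))"

definition pullback :: "nat set set \<Rightarrow> (nat set \<Rightarrow> nat set) \<Rightarrow> (nat set \<Rightarrow> bit) \<Rightarrow> (nat set \<Rightarrow> bit)" where
  "pullback C f p = (\<lambda>c. if c \<in> C then p (f c) else 0)"

end

theory Submission
  imports Defs "HOL-Library.Indicator_Function"
begin

text \<open>The neural ring of a code is the ring of all \<open>\<bbbF>\<^sub>2\<close>-valued functions on it, and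
  the monomial \<open>x\<^sub>\<sigma>\<close> is the indicator function of the trunk \<open>Tk(\<sigma>)\<close>. Hence the
  monomials together with \<open>0\<close> are exactly the indicators of trunks, and \<open>f\<^sup>*\<close> pulls
  indicators back along preimages: \<open>f\<^sup>*\<close> is a monomial map precisely because \<open>f\<close>
  pulls trunks back to trunks. Conversely, for a ring homomorphism \<open>\<phi> : R\<^sub>D \<rightarrow> R\<^sub>C\<close>
  and a codeword \<open>c\<close>, evaluation at \<open>c\<close> after \<open>\<phi>\<close> sends the orthogonal idempotents
  \<open>\<chi>\<^bsub>{d}\<^esub>\<close> (which sum to \<open>1\<close>) to bits summing to \<open>1\<close>, so exactly one point \<open>f(c) \<in> D\<close>
  survives, and \<open>\<phi> = f\<^sup>*\<close>; if \<open>\<phi>\<close> is monomial, reading the same correspondence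
  backwards shows that \<open>f\<close> is a morphism of codes.\<close>

lemma is_code_finite: "is_code C \<Longrightarrow> finite C"
  unfolding is_code_def by (metis Pow_iff finite_Pow_iff finite_atLeastAtMost finite_subset subsetI)

lemma is_code_positive: "is_code C \<Longrightarrow> c \<in> C \<Longrightarrow> i \<in> c \<Longrightarrow> 1 \<le> i"
  unfolding is_code_def by fastforce

lemma nr_one_eq_indicator: "nr_one C = indicator C"
  by (simp add: nr_one_def indicator_def fun_eq_iff)

lemma indicator_in_neural_ring: "S \<subseteq> C \<Longrightarrow> indicator S \<in> neural_ring C"
  by (auto simp: neural_ring_def indicator_def)

lemma monomial_eq_indicator_Tk:
  assumes "finite \<sigma>"
  shows "monomial C \<sigma> = indicator (Tk C \<sigma>)"
proof -
  have "(\<Prod>i\<in>\<sigma>. coord C i c) = of_bool (\<sigma> \<subseteq> c)" if "c \<in> C" for c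
    using assms by (induction rule: finite_induct) (auto simp: coord_def that)
  then show ?thesis
    by (auto simp: monomial_def Tk_def indicator_def fun_eq_iff)
qed

lemma pullback_indicator: "pullback C f (indicator S) = indicator {c \<in> C. f c \<in> S}"
  by (simp add: pullback_def indicator_def fun_eq_iff)

lemma indicator_eq_zero_iff: "indicator S = (\<lambda>_. 0 :: 'b::zero_neq_one) \<longleftrightarrow> S = {}"
  by (auto simp: fun_eq_iff indicator_eq_0_iff)

lemma indicator_inject: "indicator S = (indicator T :: 'a \<Rightarrow> 'b::zero_neq_one) \<longleftrightarrow> S = T"
  by (metis indicator_eq_1_iff subsetI subset_antisym)

text \<open>Monomials only use indices \<open>\<ge> 1\<close>; the code hypothesis makes the trunk of a \<open>\<sigma>\<close>
  containing \<open>0\<close> empty, so it still corresponds to the zero function.\<close>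
lemma trunk_iff_indicator_monomial:
  assumes "is_code C"
  shows "is_trunk C T \<longleftrightarrow> indicator T = (\<lambda>_. 0 :: bit) \<or> is_monomial C (indicator T)"
proof
  assume "is_trunk C T"
  then consider "T = {}" | \<sigma> where "finite \<sigma>" "T = Tk C \<sigma>"
    unfolding is_trunk_def by blast
  then show "indicator T = (\<lambda>_. 0 :: bit) \<or> is_monomial C (indicator T)"
  proof cases
    case 1
    then show ?thesis by (simp add: indicator_eq_zero_iff)
  next
    case (2 \<sigma>)
    show ?thesis
    proof (cases "\<forall>i\<in>\<sigma>. 1 \<le> i")
      case True
      then show ?thesis
        using 2 by (auto simp: is_monomial_def monomial_eq_indicator_Tk)
    next
      case False
      then have "T = {}"
        using 2 is_code_positive[OF assms] by (fastforce simp: Tk_def)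
      then show ?thesis by (simp add: indicator_eq_zero_iff)
    qed
  qed
next
  assume "indicator T = (\<lambda>_. 0 :: bit) \<or> is_monomial C (indicator T)"
  then show "is_trunk C T"
    by (auto simp: is_trunk_def is_monomial_def indicator_eq_zero_iff
        monomial_eq_indicator_Tk indicator_inject)
qed

lemma trunk_subset: "is_trunk C T \<Longrightarrow> T \<subseteq> C"
  by (auto simp: is_trunk_def Tk_def)

lemma ring_hom_nr_pullback:
  assumes "\<forall>c\<in>C. f c \<in> D"
  shows "ring_hom_nr D C (pullback C f)"
  using assms by (simp add: ring_hom_nr_def pullback_def neural_ring_def nr_one_def
      fun_eq_iff del: add_bit_eq_xor mult_bit_eq_and)

lemma monomial_map_pullback:
  assumes "is_code C" and f: "code_morphism C D f"
  shows "monomial_map D C (pullback C f)"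
  unfolding monomial_map_def
proof (intro conjI allI impI)
  show "ring_hom_nr D C (pullback C f)"
    using f by (simp add: code_morphism_def ring_hom_nr_pullback)
next
  fix p assume "is_monomial D p"
  then obtain \<sigma> where "finite \<sigma>" and p: "p = indicator (Tk D \<sigma>)"
    by (auto simp: is_monomial_def monomial_eq_indicator_Tk)
  then have "is_trunk D (Tk D \<sigma>)"
    by (auto simp: is_trunk_def)
  then have "is_trunk C {c \<in> C. f c \<in> Tk D \<sigma>}"
    using f by (simp add: code_morphism_def)
  then show "pullback C f p = (\<lambda>_. 0) \<or> is_monomial C (pullback C f p)"
    using trunk_iff_indicator_monomial[OF \<open>is_code C\<close>] by (simp add: p pullback_indicator)
qed

lemma pullback_id: "p \<in> neural_ring C \<Longrightarrow> pullback C id p = p"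
  by (auto simp: pullback_def neural_ring_def fun_eq_iff)

lemma pullback_comp:
  "\<forall>c\<in>C. f c \<in> D \<Longrightarrow> pullback C (g \<circ> f) p = pullback C f (pullback D g p)"
  by (auto simp: pullback_def fun_eq_iff)

lemma pullback_eqD:
  assumes "\<forall>c\<in>C. f c \<in> D" and "\<forall>p\<in>neural_ring D. pullback C f p = pullback C g p" and "c \<in> C"
  shows "f c = g c"
proof -
  have "indicator {f c} \<in> neural_ring D"
    using assms(1,3) by (simp add: indicator_in_neural_ring)
  then have "pullback C f (indicator {f c}) c = pullback C g (indicator {f c}) c"
    using assms(2) by simp
  then show ?thesis
    using assms(3) by (simp add: pullback_indicator indicator_def)
qed

lemma ring_hom_nr_zero:
  assumes "ring_hom_nr D C \<phi>"
  shows "\<phi> (\<lambda>_. 0) = (\<lambda>_. 0)"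
proof -
  have "(\<lambda>_. 0 :: bit) \<in> neural_ring D"
    by (simp add: neural_ring_def)
  then have "\<phi> (\<lambda>_. 0 + 0) = (\<lambda>c. \<phi> (\<lambda>_. 0) c + \<phi> (\<lambda>_. 0) c)"
    using assms by (simp only: ring_hom_nr_def)
  then show ?thesis
    by (simp add: fun_eq_iff del: add_bit_eq_xor)
qed

lemma ring_hom_nr_indicator_sum:
  assumes "ring_hom_nr D C \<phi>" and "finite S" and "S \<subseteq> D"
  shows "\<phi> (indicator S) c = (\<Sum>d\<in>S. \<phi> (indicator {d}) c)"
  using assms(2,3)
proof (induction rule: finite_induct)
  case empty
  then show ?case
    using ring_hom_nr_zero[OF assms(1)] by simp
next
  case (insert d S)
  have "indicator (insert d S) = (\<lambda>x. indicator S x + indicator {d} x :: bit)"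
    using insert.hyps(2) by (auto simp: fun_eq_iff indicator_def)
  then have "\<phi> (indicator (insert d S)) = (\<lambda>x. \<phi> (indicator S) x + \<phi> (indicator {d}) x)"
    using assms(1) insert.prems by (simp add: ring_hom_nr_def indicator_in_neural_ring)
  then show ?case
    using insert by (simp add: add.commute del: add_bit_eq_xor)
qed

lemma ring_hom_nr_point:
  assumes "ring_hom_nr D C \<phi>" and "finite D" and "c \<in> C"
  shows "\<exists>d\<in>D. \<phi> (indicator {d}) c = 1"
proof -
  have "(\<Sum>d\<in>D. \<phi> (indicator {d}) c) = \<phi> (nr_one D) c"
    using ring_hom_nr_indicator_sum[OF assms(1,2)] by (simp add: nr_one_eq_indicator)
  also have "\<dots> = 1"
    using assms(1,3) by (simp add: ring_hom_nr_def nr_one_def)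
  finally have "(\<Sum>d\<in>D. \<phi> (indicator {d}) c) \<noteq> 0"
    by simp
  then show ?thesis
    by (meson sum.neutral bit_not_zero_iff)
qed

lemma ring_hom_nr_eq_pullback:
  assumes \<phi>: "ring_hom_nr D C \<phi>" and f: "\<forall>c\<in>C. f c \<in> D \<and> \<phi> (indicator {f c}) c = 1"
    and p: "p \<in> neural_ring D"
  shows "\<phi> p = pullback C f p"
proof
  fix c
  show "\<phi> p c = pullback C f p c"
  proof (cases "c \<in> C")
    case False
    then show ?thesis
      using \<phi> p by (simp add: ring_hom_nr_def neural_ring_def pullback_def)
  next
    case True
    let ?d = "f c"
    have "(\<lambda>x. p x * indicator {?d} x) = (if p ?d = 1 then indicator {?d} else (\<lambda>_. 0))"
      by (auto simp: fun_eq_iff indicator_def)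
    moreover have "\<phi> p c = \<phi> (\<lambda>x. p x * indicator {?d} x) c"
      using \<phi> p f True by (simp add: ring_hom_nr_def indicator_in_neural_ring)
    ultimately show ?thesis
      using f True ring_hom_nr_zero[OF \<phi>] by (auto simp: pullback_def)
  qed
qed

lemma monomial_map_eq_pullback:
  assumes C: "is_code C" and D: "is_code D" and \<phi>: "monomial_map D C \<phi>"
  shows "\<exists>f. code_morphism C D f \<and> (\<forall>p\<in>neural_ring D. \<phi> p = pullback C f p)"
proof -
  have hom: "ring_hom_nr D C \<phi>"
    using \<phi> by (simp add: monomial_map_def)
  have "\<forall>c\<in>C. \<exists>d. d \<in> D \<and> \<phi> (indicator {d}) c = 1"
    using ring_hom_nr_point[OF hom is_code_finite[OF D]] by blast
  then obtain f where f: "\<forall>c\<in>C. f c \<in> D \<and> \<phi> (indicator {f c}) c = 1"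
    by (auto dest: bchoice)
  have eq: "\<forall>p\<in>neural_ring D. \<phi> p = pullback C f p"
    using ring_hom_nr_eq_pullback[OF hom f] by blast
  have "is_trunk C {c \<in> C. f c \<in> T}" if T: "is_trunk D T" for T
  proof -
    have "indicator T = (\<lambda>_. 0 :: bit) \<or> is_monomial D (indicator T)"
      using T trunk_iff_indicator_monomial[OF D] by blast
    then have "\<phi> (indicator T) = (\<lambda>_. 0) \<or> is_monomial C (\<phi> (indicator T))"
      using \<phi> ring_hom_nr_zero[OF hom] by (auto simp: monomial_map_def)
    moreover have "\<phi> (indicator T) = indicator {c \<in> C. f c \<in> T}"
      using eq T by (simp add: indicator_in_neural_ring trunk_subset pullback_indicator)
    ultimately show ?thesis
      using trunk_iff_indicator_monomial[OF C] by simp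
  qed
  then have "code_morphism C D f"
    using f by (simp add: code_morphism_def)
  with eq show ?thesis by blast
qed

theorem theorem1p4:
  shows
    \<comment> \<open>well-defined on morphisms: f^* is a monomial map R_D -> R_C\<close>
    "(\<forall>C D f. is_code C \<and> is_code D \<and> code_morphism C D f \<longrightarrow>
         monomial_map D C (pullback C f))
   \<comment> \<open>preserves identities\<close>
   \<and> (\<forall>C. is_code C \<longrightarrow> (\<forall>p\<in>neural_ring C. pullback C id p = p))
   \<comment> \<open>contravariant functoriality\<close>
   \<and> (\<forall>C D E f g. is_code C \<and> is_code D \<and> is_code E \<and>
         code_morphism C D f \<and> code_morphism D E g \<longrightarrow>
         (\<forall>p\<in>neural_ring E. pullback C (g \<circ> f) p = pullback C f (pullback D g p)))
   \<comment> \<open>faithful\<close>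
   \<and> (\<forall>C D f g. is_code C \<and> is_code D \<and> code_morphism C D f \<and> code_morphism C D g \<and>
         (\<forall>p\<in>neural_ring D. pullback C f p = pullback C g p) \<longrightarrow> (\<forall>c\<in>C. f c = g c))
   \<comment> \<open>full\<close>
   \<and> (\<forall>C D \<phi>. is_code C \<and> is_code D \<and> monomial_map D C \<phi> \<longrightarrow>
         (\<exists>f. code_morphism C D f \<and> (\<forall>p\<in>neural_ring D. \<phi> p = pullback C f p)))"
proof (intro conjI allI impI ballI)
  fix C D f assume "is_code C \<and> is_code D \<and> code_morphism C D f"
  then show "monomial_map D C (pullback C f)"
    by (simp add: monomial_map_pullback)
next
  fix C p assume "p \<in> neural_ring C"
  then show "pullback C id p = p"
    by (rule pullback_id)
next
  fix C D E f g p
  assume "is_code C \<and> is_code D \<and> is_code E \<and> code_morphism C D f \<and> code_morphism D E g"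
  then show "pullback C (g \<circ> f) p = pullback C f (pullback D g p)"
    by (simp add: code_morphism_def pullback_comp)
next
  fix C D f g c
  assume "is_code C \<and> is_code D \<and> code_morphism C D f \<and> code_morphism C D g \<and>
    (\<forall>p\<in>neural_ring D. pullback C f p = pullback C g p)" and "c \<in> C"
  then show "f c = g c"
    using pullback_eqD[of C f D g c] by (simp add: code_morphism_def)
next
  fix C D \<phi> assume "is_code C \<and> is_code D \<and> monomial_map D C \<phi>"
  then show "\<exists>f. code_morphism C D f \<and> (\<forall>p\<in>neural_ring D. \<phi> p = pullback C f p)"
    by (simp add: monomial_map_eq_pullback)
qed

end
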